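(* For all integers $k\ge 3$ and $n\ge 1$, the cycle chain $\mathcal{C}_k^n$ is odd prime.
   Context: All graphs are finite and simple. A graph $G$ of order $N$ is odd prime if there is a bijection $\ell:V(G)\to\{1,3,\ldots,2N-1\}$ with $\gcd(\ell(u),\ell(v))=1$ for every edge $uv$. The cycle chain $\mathcal{C}_k^n$ has vertices $v_1,\ldots,v_{n+1}$ and, for each $i=1,\ldots,n$, two internally disjoint paths joining $v_i$ to $v_{i+1}$ (with all internal vertices new and distinct): if $k$ is even, the paths $v_i,w_{i,1},\ldots,w_{i,k/2-1},v_{i+1}$ and $v_i,x_{i,1},\ldots,x_{i,k/2-1},v_{i+1}$; if $k$ is odd, the paths $v_i,w_{i,1},\ldots,w_{i,(k-1)/2-1},v_{i+1}$ and $v_i,x_{i,1},\ldots,x_{i,(k-1)/2},v_{i+1}$. Thus it is a chain of $n$ cycles of length $k$, consecutive cycles sharing the single vertex $v_{i+1}$. *)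

theory Defs
  imports Main "HOL-Computational_Algebra.Primes"
begin

text \<open>A finite simple graph is given by a vertex set V and a set E of
  two-element subsets of V (unordered edges).\<close>

definition odd_prime_graph :: "'a set \<Rightarrow> 'a set set \<Rightarrow> bool" where
  "odd_prime_graph V E \<longleftrightarrow>
     (\<exists>l :: 'a \<Rightarrow> nat.
        bij_betw l V ((\<lambda>j. 2 * j + 1) ` {..<card V}) \<and>
        (\<forall>u v. {u, v} \<in> E \<longrightarrow> coprime (l u) (l v)))"

datatype cvert = CV nat | CW nat nat | CX nat nat

text \<open>Number of internal vertices on the w-path and on the x-path.\<close>
definition wlen :: "nat \<Rightarrow> nat" where
  "wlen k = (if even k then k div 2 - 1 else (k - 1) div 2 - 1)"

definition xlen :: "nat \<Rightarrow> nat" where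
  "xlen k = (if even k then k div 2 - 1 else (k - 1) div 2)"

definition path_edges :: "'a list \<Rightarrow> 'a set set" where
  "path_edges xs = {{xs ! j, xs ! Suc j} | j. Suc j < length xs}"

definition wpath :: "nat \<Rightarrow> nat \<Rightarrow> cvert list" where
  "wpath k i = [CV i] @ map (CW i) [1..<wlen k + 1] @ [CV (Suc i)]"

definition xpath :: "nat \<Rightarrow> nat \<Rightarrow> cvert list" where
  "xpath k i = [CV i] @ map (CX i) [1..<xlen k + 1] @ [CV (Suc i)]"

definition cycle_chain_V :: "nat \<Rightarrow> nat \<Rightarrow> cvert set" where
  "cycle_chain_V k n = (\<Union>i\<in>{1..n}. set (wpath k i) \<union> set (xpath k i))"

definition cycle_chain_E :: "nat \<Rightarrow> nat \<Rightarrow> cvert set set" where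
  "cycle_chain_E k n = (\<Union>i\<in>{1..n}. path_edges (wpath k i) \<union> path_edges (xpath k i))"

end

theory Submission
  imports Defs
begin

(* Number the vertices cycle by cycle: v_i gets (i - 1)(k - 1), and the internal vertices
   of the i-th cycle get the offsets 1, ..., k - 2 after it, alternating between the two
   paths (w_j and x_j get 2j - 1 and 2j in some order, the longer path going first).
   Then consecutive vertices of every path get numbers differing by 1 or 2, so labelling
   the vertex numbered p by 2p + 1 works: a common divisor of two odd numbers differing
   by 2 or 4 divides a power of 2. *)

lemma coprime_odd_if_gap:
  fixes a b :: nat
  assumes "\<bar>int a - int b\<bar> \<in> {1, 2}"
  shows "coprime (2 * a + 1) (2 * b + 1)"
proof -
  have step: "coprime (2 * x + 1) (2 * y + 1)" if "y = x + d" "d \<in> {1, 2}" for x y d :: nat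
  proof -
    have "2 * d = 2 ^ d" using that by auto
    then have "coprime (2 * x + 1) (2 * d)"
      by simp
    then have "coprime (2 * x + 1) ((2 * x + 1) + 2 * d)"
      by (simp only: coprime_iff_gcd_eq_1 gcd_add2)
    then show ?thesis using that(1) by (simp add: algebra_simps)
  qed
  from assms have "b = a + 1 \<or> b = a + 2 \<or> a = b + 1 \<or> a = b + 2"
    by auto
  then show ?thesis using step[of _ _ 1] step[of _ _ 2] coprime_commute by blast
qed

lemma odd_prime_graph_if_gap:
  assumes bij: "bij_betw f V {..<N}"
    and gap: "\<And>u v. {u, v} \<in> E \<Longrightarrow> \<bar>int (f u) - int (f v)\<bar> \<in> {1, 2}"
  shows "odd_prime_graph V E"
proof -
  have "card V = N" using bij_betw_same_card[OF bij] by simp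
  moreover have "bij_betw (\<lambda>j. 2 * j + 1) {..<N} ((\<lambda>j. 2 * j + 1) ` {..<N})"
    by (rule inj_on_imp_bij_betw) (auto simp: inj_on_def)
  ultimately have "bij_betw (\<lambda>v. 2 * f v + 1) V ((\<lambda>j. 2 * j + 1) ` {..<card V})"
    using bij_betw_trans[OF bij] by (simp add: comp_def)
  then show ?thesis
    unfolding odd_prime_graph_def using gap coprime_odd_if_gap by blast
qed

lemma path_edges_gap:
  assumes "\<And>j. Suc j < length xs \<Longrightarrow> \<bar>int (f (xs ! Suc j)) - int (f (xs ! j))\<bar> \<in> {1, 2}"
    and "{u, v} \<in> path_edges xs"
  shows "\<bar>int (f u) - int (f v)\<bar> \<in> {1, 2}"
proof -
  from assms(2) obtain j where "Suc j < length xs" "{u, v} = {xs ! j, xs ! Suc j}"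
    unfolding path_edges_def by blast
  with assms(1)[of j] show ?thesis by (auto simp: doubleton_eq_iff abs_minus_commute)
qed

lemma path_step_gap:
  assumes "length xs = a + 2" "c \<le> 1" "2 * a - c < m" "m \<le> 2 * a + 2 - c"
    and "f (xs ! 0) = b" "\<And>j. 1 \<le> j \<Longrightarrow> j \<le> a \<Longrightarrow> f (xs ! j) = b + (2 * j - c)"
    and "f (xs ! (a + 1)) = b + m"
    and "Suc j < length xs"
  shows "\<bar>int (f (xs ! Suc j)) - int (f (xs ! j))\<bar> \<in> {1, 2}"
proof -
  consider "j = 0" "a = 0" | "j = 0" "a \<noteq> 0" | "1 \<le> j" "j < a" | "1 \<le> j" "j = a"
    using assms(1,8) by linarith
  then show ?thesis
  proof cases
    case 1
    then show ?thesis using assms(3-5,7) by auto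
  next
    case 2
    then show ?thesis using assms(2,5) assms(6)[of 1] by auto
  next
    case 3
    then show ?thesis using assms(2) assms(6)[of j] assms(6)[of "Suc j"] by auto
  next
    case 4
    then show ?thesis using assms(3,4,7) assms(6)[of j] by auto
  qed
qed

lemma mem_cycle_chain_V:
  assumes "n \<ge> 1"
  shows "v \<in> cycle_chain_V k n \<longleftrightarrow>
    (\<exists>i. v = CV i \<and> 1 \<le> i \<and> i \<le> n + 1) \<or>
    (\<exists>i j. v = CW i j \<and> 1 \<le> i \<and> i \<le> n \<and> 1 \<le> j \<and> j \<le> wlen k) \<or>
    (\<exists>i j. v = CX i j \<and> 1 \<le> i \<and> i \<le> n \<and> 1 \<le> j \<and> j \<le> xlen k)"
    (is "_ \<longleftrightarrow> ?CV \<or> ?CW \<or> ?CX")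
proof
  assume "v \<in> cycle_chain_V k n"
  then show "?CV \<or> ?CW \<or> ?CX"
    unfolding cycle_chain_V_def wpath_def xpath_def by auto
next
  have last: "CV (Suc n) \<in> cycle_chain_V k n"
    using assms unfolding cycle_chain_V_def wpath_def by force
  assume "?CV \<or> ?CW \<or> ?CX"
  then show "v \<in> cycle_chain_V k n"
    using last unfolding cycle_chain_V_def wpath_def xpath_def by (force simp: le_Suc_eq)
qed

fun chain_pos :: "nat \<Rightarrow> cvert \<Rightarrow> nat" where
  "chain_pos k (CV i) = (i - 1) * (k - 1)"
| "chain_pos k (CW i j) = (i - 1) * (k - 1) + (2 * j - of_bool (even k))"
| "chain_pos k (CX i j) = (i - 1) * (k - 1) + (2 * j - of_bool (odd k))"

definition chain_vertex :: "nat \<Rightarrow> nat \<Rightarrow> cvert" where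
  "chain_vertex k p = (let q = p div (k - 1); r = p mod (k - 1) in
     if r = 0 then CV (Suc q)
     else if odd (r + k) then CW (Suc q) ((r + 1) div 2)
     else CX (Suc q) ((r + 1) div 2))"

lemma CW_offset_iff:
  assumes "k \<ge> 3"
  shows "(1 \<le> j \<and> j \<le> wlen k \<and> r = 2 * j - of_bool (even k)) \<longleftrightarrow>
    (0 < r \<and> r < k - 1 \<and> odd (r + k) \<and> j = (r + 1) div 2)"
  using assms unfolding wlen_def by (cases "even k"; auto elim!: evenE oddE; presburger)

lemma CX_offset_iff:
  assumes "k \<ge> 3"
  shows "(1 \<le> j \<and> j \<le> xlen k \<and> r = 2 * j - of_bool (odd k)) \<longleftrightarrow>
    (0 < r \<and> r < k - 1 \<and> even (r + k) \<and> j = (r + 1) div 2)"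
  using assms unfolding xlen_def by (cases "even k"; auto elim!: evenE oddE; presburger)

lemma chain_vertex_eq:
  assumes "r < k - 1"
  shows "chain_vertex k (q * (k - 1) + r) =
     (if r = 0 then CV (Suc q)
      else if odd (r + k) then CW (Suc q) ((r + 1) div 2)
      else CX (Suc q) ((r + 1) div 2))"
  using assms unfolding chain_vertex_def Let_def by simp

lemma chain_pos_inverse:
  assumes k: "k \<ge> 3" and n: "n \<ge> 1" and v: "v \<in> cycle_chain_V k n"
  shows "chain_vertex k (chain_pos k v) = v" and "chain_pos k v \<le> n * (k - 1)"
proof -
  have cycle_le: "(i - 1) * (k - 1) + r \<le> n * (k - 1)" if "1 \<le> i" "i \<le> n" "r < k - 1" for i r
  proof -
    have "(i - 1) * (k - 1) + r \<le> i * (k - 1)"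
      using that by (cases i) auto
    also have "\<dots> \<le> n * (k - 1)" using that by simp
    finally show ?thesis .
  qed
  from v consider
      (CV) i where "v = CV i" "1 \<le> i" "i \<le> n + 1"
    | (CW) i j where "v = CW i j" "1 \<le> i" "i \<le> n" "1 \<le> j" "j \<le> wlen k"
    | (CX) i j where "v = CX i j" "1 \<le> i" "i \<le> n" "1 \<le> j" "j \<le> xlen k"
    unfolding mem_cycle_chain_V[OF n] by blast
  then have "chain_vertex k (chain_pos k v) = v \<and> chain_pos k v \<le> n * (k - 1)"
  proof cases
    case CV
    then show ?thesis using k chain_vertex_eq[of 0 k "i - 1"] by simp
  next
    case CW
    define r where "r = 2 * j - of_bool (even k)"
    have "0 < r" "r < k - 1" "odd (r + k)" "j = (r + 1) div 2"
      using CW_offset_iff[OF k, of j r] CW r_def by auto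
    then show ?thesis
      using CW cycle_le chain_vertex_eq[of r k "i - 1"] by (simp add: r_def[symmetric])
  next
    case CX
    define r where "r = 2 * j - of_bool (odd k)"
    have "0 < r" "r < k - 1" "even (r + k)" "j = (r + 1) div 2"
      using CX_offset_iff[OF k, of j r] CX r_def by auto
    then show ?thesis
      using CX cycle_le chain_vertex_eq[of r k "i - 1"] by (simp add: r_def[symmetric])
  qed
  then show "chain_vertex k (chain_pos k v) = v" and "chain_pos k v \<le> n * (k - 1)"
    by auto
qed

lemma chain_vertex_inverse:
  assumes k: "k \<ge> 3" and n: "n \<ge> 1" and p: "p \<le> n * (k - 1)"
  shows "chain_vertex k p \<in> cycle_chain_V k n" and "chain_pos k (chain_vertex k p) = p"
proof -
  define q where "q = p div (k - 1)"
  define r where "r = p mod (k - 1)"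
  have p_eq: "p = q * (k - 1) + r"
    by (simp only: q_def r_def div_mult_mod_eq)
  have r_less: "r < k - 1"
    using k by (simp add: r_def)
  have "q * (k - 1) \<le> n * (k - 1)"
    using p p_eq by linarith
  then have "q \<le> n"
    using k by simp
  moreover have "q < n" if "r \<noteq> 0"
  proof (rule ccontr)
    assume "\<not> q < n"
    then have "n * (k - 1) \<le> q * (k - 1)" by simp
    with p p_eq that show False by linarith
  qed
  ultimately have "chain_vertex k p \<in> cycle_chain_V k n \<and> chain_pos k (chain_vertex k p) = p"
    using chain_vertex_eq[OF r_less, of q] CW_offset_iff[OF k, of "(r + 1) div 2" r]
      CX_offset_iff[OF k, of "(r + 1) div 2" r] r_less
    by (auto simp: p_eq mem_cycle_chain_V[OF n])
  then show "chain_vertex k p \<in> cycle_chain_V k n" and "chain_pos k (chain_vertex k p) = p"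
    by auto
qed

lemma bij_betw_chain_pos:
  assumes "k \<ge> 3" and "n \<ge> 1"
  shows "bij_betw (chain_pos k) (cycle_chain_V k n) {..<n * (k - 1) + 1}"
  by (rule bij_betw_byWitness[where f' = "chain_vertex k"])
    (use chain_pos_inverse[OF assms] chain_vertex_inverse[OF assms] in \<open>auto simp: less_Suc_eq_le\<close>)

lemma chain_path_gap:
  fixes C :: "nat \<Rightarrow> nat \<Rightarrow> cvert"
  assumes "1 \<le> i" "c \<le> 1" "2 * a - c < k - 1" "k - 1 \<le> 2 * a + 2 - c"
    and "\<And>j. chain_pos k (C i j) = (i - 1) * (k - 1) + (2 * j - c)"
    and "{u, v} \<in> path_edges ([CV i] @ map (C i) [1..<a + 1] @ [CV (Suc i)])"
  shows "\<bar>int (chain_pos k u) - int (chain_pos k v)\<bar> \<in> {1, 2}"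
proof -
  let ?xs = "[CV i] @ map (C i) [1..<a + 1] @ [CV (Suc i)]"
  have "?xs ! j = C i j" if "1 \<le> j" "j \<le> a" for j
    using that by (auto simp: nth_append nth_Cons' simp del: upt_Suc)
  moreover have "chain_pos k (?xs ! (a + 1)) = (i - 1) * (k - 1) + (k - 1)"
    using assms(1) by (simp add: nth_append mult_eq_if)
  ultimately show ?thesis
    by (intro path_edges_gap[OF path_step_gap assms(6)]) (use assms in auto)
qed

lemma chain_pos_gap:
  assumes k: "k \<ge> 3" and e: "{u, v} \<in> cycle_chain_E k n"
  shows "\<bar>int (chain_pos k u) - int (chain_pos k v)\<bar> \<in> {1, 2}"
proof -
  from e obtain i where "1 \<le> i"
    and "{u, v} \<in> path_edges (wpath k i) \<or> {u, v} \<in> path_edges (xpath k i)"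
    unfolding cycle_chain_E_def by auto
  moreover have "2 * wlen k - of_bool (even k) < k - 1" "k - 1 \<le> 2 * wlen k + 2 - of_bool (even k)"
    "2 * xlen k - of_bool (odd k) < k - 1" "k - 1 \<le> 2 * xlen k + 2 - of_bool (odd k)"
    using k unfolding wlen_def xlen_def by (cases "even k"; auto elim!: evenE oddE)+
  ultimately show ?thesis
    unfolding wpath_def xpath_def
    by (elim disjE) (rule chain_path_gap; simp)+
qed

theorem theorem3p3:
  fixes k n :: nat
  assumes "k \<ge> 3" and "n \<ge> 1"
  shows "odd_prime_graph (cycle_chain_V k n) (cycle_chain_E k n)"
  by (rule odd_prime_graph_if_gap[OF bij_betw_chain_pos[OF assms] chain_pos_gap[OF assms(1)]])

end
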